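(* For positive integers $n,m,k$ with $k<m<2k$, $$N_P(n,k,m)\ \ge\ \Bigl(2k-m+\frac{1}{\binom{m-1}{2k-m}}\Bigr)n.$$
   Context: Fix a finite field $\mathbb{F}_q$; $[n]=\{1,\dots,n\}$. An $(n,N,k,m)$-PIR array code over $\mathbb{F}_q$ is an $\mathbb{F}_q$-linear map $\mathcal{C}:\mathbf x\in\mathbb{F}_q^n\mapsto(\mathbf c_1,\dots,\mathbf c_m)$ with buckets $\mathbf c_\ell\in\mathbb{F}_q^{N_\ell}$, $N_\ell\ge1$ independent of $\mathbf x$, $\sum_\ell N_\ell=N$, such that for every $i\in[n]$ there is a partition of $[m]$ into $k$ sets $R_1,\dots,R_k$ such that for each $j$, $x_i$ is an $\mathbb{F}_q$-linear combination of values $f_\ell(\mathbf c_\ell)$, $\ell\in R_j$, for some linear functionals $f_\ell:\mathbb{F}_q^{N_\ell}\to\mathbb{F}_q$ (independent of $\mathbf x$). $N_P(n,k,m)$ denotes the minimum $N$ for which an $(n,N,k,m)$-PIR array code over $\mathbb{F}_q$ exists. *)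

theory Defs
  imports Complex_Main
begin

text \<open>The finite field F_q is a type 'a of class {finite, field}.
Messages x are functions nat => 'a, of which only the entries x 1, ..., x n matter.
Buckets are indexed by 1..m, bucket l has Nb l coordinates indexed by 1..Nb l.
The linear encoding map is given by its coefficient matrix G:
coordinate t of bucket l equals  sum over s in 1..n of  G l t s * x s.
A linear functional on F_q^(Nb l) is given by its coefficient vector.\<close>

definition bucket_val ::
  "nat \<Rightarrow> (nat \<Rightarrow> nat \<Rightarrow> nat \<Rightarrow> 'a::field) \<Rightarrow> (nat \<Rightarrow> 'a) \<Rightarrow> nat \<Rightarrow> nat \<Rightarrow> 'a" where
  "bucket_val n G x l t = (\<Sum>s\<in>{1..n}. G l t s * x s)"

definition is_partition_into :: "nat \<Rightarrow> nat set \<Rightarrow> (nat \<Rightarrow> nat set) \<Rightarrow> bool" where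
  "is_partition_into k M R \<longleftrightarrow>
     (\<forall>j\<in>{1..k}. R j \<noteq> {}) \<and>
     (\<Union>j\<in>{1..k}. R j) = M \<and>
     (\<forall>j\<in>{1..k}. \<forall>j'\<in>{1..k}. j \<noteq> j' \<longrightarrow> R j \<inter> R j' = {})"

text \<open>(n, N, k, m)-PIR array code with bucket sizes Nb (so N = sum of Nb l, l = 1..m)
and encoding matrix G.\<close>
definition is_PIR_array_code ::
  "nat \<Rightarrow> nat \<Rightarrow> nat \<Rightarrow> (nat \<Rightarrow> nat) \<Rightarrow> (nat \<Rightarrow> nat \<Rightarrow> nat \<Rightarrow> 'a::{finite,field}) \<Rightarrow> bool" where
  "is_PIR_array_code n k m Nb G \<longleftrightarrow>
     (\<forall>l\<in>{1..m}. Nb l \<ge> 1) \<and>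
     (\<forall>i\<in>{1..n}. \<exists>R. is_partition_into k {1..m} R \<and>
        (\<forall>j\<in>{1..k}. \<exists>(f :: nat \<Rightarrow> nat \<Rightarrow> 'a) (a :: nat \<Rightarrow> 'a).
           \<forall>x :: nat \<Rightarrow> 'a.
             x i = (\<Sum>l\<in>R j. a l * (\<Sum>t\<in>{1..Nb l}. f l t * bucket_val n G x l t))))"

definition N_P :: "'a::{finite,field} itself \<Rightarrow> nat \<Rightarrow> nat \<Rightarrow> nat \<Rightarrow> nat" where
  "N_P _ n k m = (LEAST N. \<exists>Nb (G :: nat \<Rightarrow> nat \<Rightarrow> nat \<Rightarrow> 'a).
       is_PIR_array_code n k m Nb G \<and> (\<Sum>l\<in>{1..m}. Nb l) = N)"

end

theory Submission
  imports Defs "HOL-Library.FuncSet" "HOL-Library.Cardinality"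
begin

text \<open>Identify what bucket \<open>l\<close> can answer with its row space \<open>V l\<close>, the set of
  coefficient vectors (in \<open>F_q^n\<close>) of the linear forms in \<open>x\<close> it can return, and call \<open>l\<close> a
  solo bucket of \<open>x i\<close> if \<open>e i \<in> V l\<close>. A partition of the \<open>m\<close> buckets into \<open>k\<close> recovery
  sets has at least \<open>2k - m\<close> singleton parts, so every symbol has at least \<open>2k - m\<close> solo
  buckets; call it tight if it has exactly that many. A tight symbol has fewer than \<open>k\<close> solo
  buckets, so some recovery set avoids all of them.

  Bucket \<open>l\<close> contains every vector supported on the symbols \<open>X l\<close> it serves solo,
  hence \<open>q ^ Nb l \<ge> |V l| \<ge> q ^ |X l| * |\<pi>\<^sub>Y\<^sub>l (V l)|\<close>, where \<open>Y l\<close> are the tight symbols not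
  solo at \<open>l\<close>. Grouping the tight symbols \<open>Y\<close> by their solo set \<open>S\<close> (a \<open>(2k-m)\<close>-subset),
  all vectors supported on such a class come from the buckets outside \<open>S\<close>; since every bucket
  lies outside exactly \<open>C = (m-1 choose 2k-m)\<close> of these sets, \<open>q ^ |Y| \<le> (\<Prod>l. |\<pi>\<^sub>Y\<^sub>l (V l)|) ^ C\<close>.
  Together \<open>C * N \<ge> |Y| + C * \<Sum>l. |X l|\<close>, and \<open>\<Sum>l. |X l| \<ge> (2k-m) n + (n - |Y|)\<close> gives
  \<open>C * N \<ge> n + C (2k-m) n\<close>.\<close>

section \<open>Coordinate projections\<close>

definition coord_proj :: "'b set \<Rightarrow> ('b \<Rightarrow> 'a::zero) \<Rightarrow> 'b \<Rightarrow> 'a" where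
  "coord_proj A v = (\<lambda>s. if s \<in> A then v s else 0)"

lemma coord_proj_coord_proj_subset:
  "T \<subseteq> B \<Longrightarrow> coord_proj T (coord_proj B v) = coord_proj T v"
  by (auto simp: coord_proj_def fun_eq_iff)

lemma coord_proj_sum:
  "coord_proj T (\<lambda>s. \<Sum>l\<in>L. w l s) = (\<lambda>s. \<Sum>l\<in>L. coord_proj T (w l) s)"
  by (auto simp: coord_proj_def fun_eq_iff)

lemma card_range_coord_proj:
  assumes "finite A"
  shows "card (range (coord_proj A :: ('b \<Rightarrow> 'a::{finite,zero}) \<Rightarrow> _)) = CARD('a) ^ card A"
proof -
  have "range (coord_proj A) = coord_proj A ` (A \<rightarrow>\<^sub>E (UNIV :: 'a set))"
  proof (intro equalityI subsetI)
    fix v assume "v \<in> range (coord_proj A :: ('b \<Rightarrow> 'a) \<Rightarrow> _)"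
    then obtain c where "v = coord_proj A c" by auto
    then have "v = coord_proj A (restrict c A)" by (auto simp: coord_proj_def fun_eq_iff)
    then show "v \<in> coord_proj A ` (A \<rightarrow>\<^sub>E UNIV)" by auto
  qed auto
  moreover have "inj_on (coord_proj A) (A \<rightarrow>\<^sub>E (UNIV :: 'a set))"
  proof (rule inj_onI, rule ext)
    fix c d :: "'b \<Rightarrow> 'a" and x
    assume "c \<in> A \<rightarrow>\<^sub>E UNIV" "d \<in> A \<rightarrow>\<^sub>E UNIV" "coord_proj A c = coord_proj A d"
    then show "c x = d x"
      by (cases "x \<in> A") (auto simp: coord_proj_def PiE_def extensional_def dest: fun_cong[of _ _ x])
  qed
  ultimately show ?thesis
    using assms by (simp add: card_image card_PiE)
qed

lemma card_coord_proj_image_mono: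
  assumes "T \<subseteq> B" and "finite W"
  shows "card (coord_proj T ` W) \<le> card (coord_proj B ` W)"
proof -
  have "coord_proj T ` W = coord_proj T ` coord_proj B ` W"
    using assms(1) by (simp add: image_image coord_proj_coord_proj_subset)
  then show ?thesis
    using assms(2) by (simp add: card_image_le)
qed

text \<open>With \<open>lift\<close> a section of the projection onto \<open>B\<close>, the map \<open>(u, w) \<mapsto> u + lift w\<close> is
  injective on vectors \<open>u\<close> supported on \<open>A\<close>, as these vanish on \<open>B\<close>.\<close>
lemma card_coord_proj_image_le:
  fixes W :: "('b \<Rightarrow> 'a::{finite,cancel_comm_monoid_add}) set"
  assumes "finite W" and "finite A" and "A \<inter> B = {}"
    and add: "\<And>u v. u \<in> W \<Longrightarrow> v \<in> W \<Longrightarrow> (\<lambda>s. u s + v s) \<in> W"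
    and supp: "range (coord_proj A) \<subseteq> W"
  shows "CARD('a) ^ card A * card (coord_proj B ` W) \<le> card W"
proof -
  define lift where "lift w = (SOME v. v \<in> W \<and> coord_proj B v = w)" for w
  have lift: "lift w \<in> W" "coord_proj B (lift w) = w" if "w \<in> coord_proj B ` W" for w
    using someI_ex[of "\<lambda>v. v \<in> W \<and> coord_proj B v = w"] that by (auto simp: lift_def)
  define \<phi> where "\<phi> = (\<lambda>(u :: 'b \<Rightarrow> 'a, w). \<lambda>s. u s + lift w s)"
  have proj_\<phi>: "coord_proj B (\<phi> (u, w)) = w"
    if u_supp: "u \<in> range (coord_proj A)" and w: "w \<in> coord_proj B ` W" for u w
  proof -
    obtain c where u: "u = coord_proj A c" using u_supp by auto
    have "coord_proj B (\<phi> (u, w)) = coord_proj B (lift w)"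
      using assms(3) by (auto simp: u \<phi>_def coord_proj_def fun_eq_iff)
    then show ?thesis using lift(2)[OF w] by simp
  qed
  have "inj_on \<phi> (range (coord_proj A) \<times> coord_proj B ` W)"
  proof (rule inj_onI)
    fix p p' assume p: "p \<in> range (coord_proj A) \<times> coord_proj B ` W"
      and p': "p' \<in> range (coord_proj A) \<times> coord_proj B ` W" and eq: "\<phi> p = \<phi> p'"
    obtain u w u' w' where pp: "p = (u, w)" "p' = (u', w')" by fastforce
    have "w = w'" using proj_\<phi> p p' eq unfolding pp by (metis SigmaE2)
    with eq show "p = p'" by (simp add: pp \<phi>_def fun_eq_iff)
  qed
  moreover have "\<phi> ` (range (coord_proj A) \<times> coord_proj B ` W) \<subseteq> W"
    using supp lift(1) by (auto simp: \<phi>_def intro!: add)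
  ultimately have "card (range (coord_proj A :: ('b \<Rightarrow> 'a) \<Rightarrow> _) \<times> coord_proj B ` W) \<le> card W"
    by (rule card_inj_on_le[OF _ _ assms(1)])
  then show ?thesis
    using assms(2) by (simp add: card_cartesian_product card_range_coord_proj)
qed

lemma card_range_coord_proj_le_prod:
  fixes W :: "'l \<Rightarrow> ('b \<Rightarrow> 'a::{finite,comm_monoid_add}) set"
  assumes "finite T" and "finite L" and "\<And>l. l \<in> L \<Longrightarrow> finite (W l)"
    and decomp: "\<And>v. v \<in> range (coord_proj T) \<Longrightarrow>
                   \<exists>w. (\<forall>l\<in>L. w l \<in> W l) \<and> v = (\<lambda>s. \<Sum>l\<in>L. w l s)"
  shows "CARD('a) ^ card T \<le> (\<Prod>l\<in>L. card (coord_proj T ` W l))"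
proof -
  define sum_set where "sum_set = (\<lambda>w. \<lambda>s. \<Sum>l\<in>L. w l s) ` PiE L (\<lambda>l. coord_proj T ` W l)"
  have "range (coord_proj T :: ('b \<Rightarrow> 'a) \<Rightarrow> _) \<subseteq> sum_set"
  proof
    fix v :: "'b \<Rightarrow> 'a" assume v: "v \<in> range (coord_proj T)"
    then obtain w where w: "\<forall>l\<in>L. w l \<in> W l" and vw: "v = (\<lambda>s. \<Sum>l\<in>L. w l s)"
      using decomp by blast
    have "v = coord_proj T v" using v by (auto simp: coord_proj_def fun_eq_iff)
    also have "\<dots> = (\<lambda>s. \<Sum>l\<in>L. restrict (\<lambda>l. coord_proj T (w l)) L l s)"
      by (simp add: vw coord_proj_sum)
    finally have "v = (\<lambda>s. \<Sum>l\<in>L. restrict (\<lambda>l. coord_proj T (w l)) L l s)" .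
    moreover have "restrict (\<lambda>l. coord_proj T (w l)) L \<in> PiE L (\<lambda>l. coord_proj T ` W l)"
      using w by auto
    ultimately show "v \<in> sum_set"
      unfolding sum_set_def by (rule image_eqI)
  qed
  moreover have "finite sum_set"
    unfolding sum_set_def using assms(2,3) by (intro finite_imageI finite_PiE) auto
  ultimately have "card (range (coord_proj T :: ('b \<Rightarrow> 'a) \<Rightarrow> _)) \<le> card sum_set"
    by (simp add: card_mono)
  also have "\<dots> \<le> (\<Prod>l\<in>L. card (coord_proj T ` W l))"
    unfolding sum_set_def using assms(2) by (metis card_PiE card_image_le finite_PiE finite_imageI assms(3))
  finally show ?thesis
    using assms(1) by (simp add: card_range_coord_proj)
qed

section \<open>Partitions\<close>

lemma partition_part_subset:
  "is_partition_into k M R \<Longrightarrow> j \<in> {1..k} \<Longrightarrow> R j \<subseteq> M"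
  unfolding is_partition_into_def by blast

lemma card_partition_UN:
  assumes P: "is_partition_into k M R" and "finite M" and J: "J \<subseteq> {1..k}"
  shows "card (\<Union>j\<in>J. R j) = (\<Sum>j\<in>J. card (R j))"
proof (rule card_UN_disjoint)
  show "finite J" using J finite_subset by blast
  show "\<forall>j\<in>J. finite (R j)"
    using J partition_part_subset[OF P] \<open>finite M\<close> finite_subset by blast
  show "\<forall>j\<in>J. \<forall>j'\<in>J. j \<noteq> j' \<longrightarrow> R j \<inter> R j' = {}"
    using P J unfolding is_partition_into_def by blast
qed

text \<open>All parts are nonempty, so at most \<open>card M - k\<close> of them can have two or more elements.\<close>
lemma partition_many_singletons:
  assumes P: "is_partition_into k M R" and M: "finite M"
  obtains J where "J \<subseteq> {1..k}" "\<And>j. j \<in> J \<Longrightarrow> card (R j) = 1" "2 * k \<le> card J + card M"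
proof
  define J where "J = {j\<in>{1..k}. card (R j) = 1}"
  show J: "J \<subseteq> {1..k}" and "\<And>j. j \<in> J \<Longrightarrow> card (R j) = 1" by (auto simp: J_def)
  have "card (R j) \<noteq> 0" if "j \<in> {1..k}" for j
    using P M that partition_part_subset[OF P that] finite_subset
    unfolding is_partition_into_def by fastforce
  then have ge2: "2 \<le> card (R j)" if "j \<in> {1..k} - J" for j
    using that by (fastforce simp: J_def)
  have "card M = card (\<Union>j\<in>{1..k}. R j)"
    using P unfolding is_partition_into_def by simp
  also have "\<dots> = (\<Sum>j\<in>J. card (R j)) + (\<Sum>j\<in>{1..k} - J. card (R j))"
    using J by (simp add: card_partition_UN[OF P M] sum.subset_diff[of J] add.commute)
  also have "(\<Sum>j\<in>J. card (R j)) = card J"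
    by (simp add: J_def)
  finally have "card M = card J + (\<Sum>j\<in>{1..k} - J. card (R j))" .
  moreover have "(\<Sum>j\<in>{1..k} - J. 2) \<le> (\<Sum>j\<in>{1..k} - J. card (R j))"
    by (rule sum_mono) (rule ge2)
  ultimately have "card J + 2 * card ({1..k} - J) \<le> card M"
    by (simp add: mult.commute)
  moreover have "card ({1..k} - J) = k - card J" and "card J \<le> k"
    using J card_mono[OF _ J] by (auto simp: card_Diff_subset finite_subset)
  ultimately show "2 * k \<le> card J + card M" by linarith
qed

lemma partition_part_disjoint:
  assumes P: "is_partition_into k M R" and M: "finite M" and "S \<subseteq> M" and "card S < k"
  obtains j where "j \<in> {1..k}" "R j \<inter> S = {}"
proof -
  have "\<exists>j\<in>{1..k}. R j \<inter> S = {}"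
  proof (rule ccontr)
    assume "\<not> (\<exists>j\<in>{1..k}. R j \<inter> S = {})"
    then have "k \<le> (\<Sum>j\<in>{1..k}. card (R j \<inter> S))"
      using sum_mono[of "{1..k}" "\<lambda>_. 1" "\<lambda>j. card (R j \<inter> S)"] \<open>S \<subseteq> M\<close> M
      by (simp add: Suc_le_eq card_gt_0_iff finite_subset)
    also have "\<dots> = card (\<Union>j\<in>{1..k}. R j \<inter> S)"
      using P \<open>S \<subseteq> M\<close> M finite_subset unfolding is_partition_into_def
      by (intro card_UN_disjoint[symmetric]) blast+
    also have "\<dots> \<le> card S"
      using \<open>S \<subseteq> M\<close> M finite_subset by (intro card_mono) auto
    finally show False using \<open>card S < k\<close> by simp
  qed
  with that show ?thesis by blast
qed

section \<open>Recovery sets of a PIR array code\<close>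

definition unit_vec :: "nat \<Rightarrow> nat \<Rightarrow> 'a::zero_neq_one" where
  "unit_vec i = (\<lambda>s. if s = i then 1 else 0)"

locale PIR_array_code =
  fixes n k m :: nat and Nb :: "nat \<Rightarrow> nat" and G :: "nat \<Rightarrow> nat \<Rightarrow> nat \<Rightarrow> 'a::{finite,field}"
  assumes code: "is_PIR_array_code n k m Nb G"
begin

text \<open>\<open>query_vec l f\<close> is the coefficient vector of the linear form \<open>x \<mapsto> f (c\<^sub>l x)\<close>, indexed
  by the message positions \<open>1..n\<close> and zero elsewhere.\<close>
definition query_vec :: "nat \<Rightarrow> (nat \<Rightarrow> 'a) \<Rightarrow> nat \<Rightarrow> 'a" where
  "query_vec l f = (\<lambda>s. \<Sum>t\<in>{1..Nb l}. f t * coord_proj {1..n} (G l t) s)"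

definition row_space :: "nat \<Rightarrow> (nat \<Rightarrow> 'a) set" where
  "row_space l = range (query_vec l)"

definition recovers :: "nat set \<Rightarrow> nat \<Rightarrow> bool" where
  "recovers L i \<longleftrightarrow> (\<exists>h. unit_vec i = (\<lambda>s. \<Sum>l\<in>L. query_vec l (h l) s))"

lemma query_vec_lincomb:
  "(\<Sum>i\<in>A. c i * query_vec l (h i) s) = query_vec l (\<lambda>t. \<Sum>i\<in>A. c i * h i t) s"
  by (simp add: query_vec_def sum_distrib_left sum_distrib_right mult.assoc sum.swap[of _ A])

lemma row_space_add:
  assumes "u \<in> row_space l" and "v \<in> row_space l"
  shows "(\<lambda>s. u s + v s) \<in> row_space l"
proof -
  obtain f g where "u = query_vec l f" and "v = query_vec l g"
    using assms by (auto simp: row_space_def)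
  then have "(\<lambda>s. u s + v s) = query_vec l (\<lambda>t. f t + g t)"
    by (simp add: query_vec_def sum.distrib distrib_right)
  then show ?thesis by (simp add: row_space_def)
qed

lemma finite_row_space: "finite (row_space l)" and card_row_space_le: "card (row_space l) \<le> CARD('a) ^ Nb l"
proof -
  have "row_space l = query_vec l ` ({1..Nb l} \<rightarrow>\<^sub>E UNIV)"
  proof (intro equalityI subsetI)
    fix v assume "v \<in> row_space l"
    then obtain f where "v = query_vec l f" by (auto simp: row_space_def)
    then have "v = query_vec l (restrict f {1..Nb l})"
      by (auto simp: query_vec_def fun_eq_iff intro!: sum.cong)
    then show "v \<in> query_vec l ` ({1..Nb l} \<rightarrow>\<^sub>E UNIV)" by auto
  qed (auto simp: row_space_def)
  then show "finite (row_space l)" and "card (row_space l) \<le> CARD('a) ^ Nb l"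
    using card_image_le[of "{1..Nb l} \<rightarrow>\<^sub>E (UNIV :: 'a set)" "query_vec l"]
    by (simp_all add: card_PiE finite_PiE)
qed

lemma recovers_from_code:
  assumes "i \<in> {1..n}"
  obtains R where "is_partition_into k {1..m} R" "\<And>j. j \<in> {1..k} \<Longrightarrow> recovers (R j) i"
proof -
  obtain R where R: "is_partition_into k {1..m} R" and rec: "\<forall>j\<in>{1..k}. \<exists>(f :: nat \<Rightarrow> nat \<Rightarrow> 'a) a.
      \<forall>x. x i = (\<Sum>l\<in>R j. a l * (\<Sum>t\<in>{1..Nb l}. f l t * bucket_val n G x l t))"
    using code assms unfolding is_PIR_array_code_def by blast
  have "recovers (R j) i" if j: "j \<in> {1..k}" for j
  proof -
    obtain f a where fa: "\<And>x :: nat \<Rightarrow> 'a.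
        x i = (\<Sum>l\<in>R j. a l * (\<Sum>t\<in>{1..Nb l}. f l t * bucket_val n G x l t))"
      using rec j by blast
    text \<open>Reading off the coefficient of \<open>x s\<close> means evaluating at \<open>x = unit_vec s\<close>.\<close>
    have "unit_vec i s = (\<Sum>l\<in>R j. query_vec l (\<lambda>t. a l * f l t) s)" for s
    proof (cases "s \<in> {1..n}")
      case True
      have "bucket_val n G (unit_vec s) l t = G l t s" for l t
        using True by (simp add: bucket_val_def unit_vec_def if_distrib[of "\<lambda>y. _ * y"] cong: if_cong)
      then show ?thesis
        using fa[of "unit_vec s"] True
        by (simp add: unit_vec_def query_vec_def coord_proj_def sum_distrib_left mult.assoc eq_commute[of i s])
    next
      case False
      then show ?thesis using assms by (auto simp: unit_vec_def query_vec_def coord_proj_def)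
    qed
    then show ?thesis
      unfolding recovers_def by (intro exI[of _ "\<lambda>l t. a l * f l t"]) (simp add: fun_eq_iff)
  qed
  with R that show ?thesis by blast
qed

lemma recovers_singleton: "recovers {l} i \<longleftrightarrow> unit_vec i \<in> row_space l"
  by (auto simp: recovers_def row_space_def)

lemma recovers_mono:
  assumes "recovers L i" and "L \<subseteq> L'" and "finite L'"
  shows "recovers L' i"
proof -
  obtain h where h: "unit_vec i = (\<lambda>s. \<Sum>l\<in>L. query_vec l (h l) s)"
    using assms(1) by (auto simp: recovers_def)
  have "(\<Sum>l\<in>L'. query_vec l (\<lambda>t. if l \<in> L then h l t else 0) s) = (\<Sum>l\<in>L. query_vec l (h l) s)" for s
    using assms(2,3) by (intro sum.mono_neutral_cong_right) (auto simp: query_vec_def)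
  then show ?thesis
    unfolding recovers_def h by (intro exI[of _ "\<lambda>l t. if l \<in> L then h l t else 0"]) simp
qed

lemma coord_proj_recovered:
  assumes "finite A" and "\<And>i. i \<in> A \<Longrightarrow> recovers L i"
  shows "\<exists>h. coord_proj A c = (\<lambda>s. \<Sum>l\<in>L. query_vec l (h l) s)"
proof -
  obtain H where H: "\<And>i. i \<in> A \<Longrightarrow> unit_vec i = (\<lambda>s. \<Sum>l\<in>L. query_vec l (H i l) s)"
    using assms(2) unfolding recovers_def by metis
  have "coord_proj A c s = (\<Sum>i\<in>A. c i * unit_vec i s)" for s
    using assms(1) by (simp add: coord_proj_def unit_vec_def if_distrib[of "\<lambda>y. _ * y"] cong: if_cong)
  also have "(\<Sum>i\<in>A. c i * unit_vec i s) = (\<Sum>l\<in>L. query_vec l (\<lambda>t. \<Sum>i\<in>A. c i * H i l t) s)" for s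
    by (simp add: H sum_distrib_left) (subst sum.swap, simp add: query_vec_lincomb)
  finally show ?thesis by (intro exI[of _ "\<lambda>l t. \<Sum>i\<in>A. c i * H i l t"]) (simp add: fun_eq_iff)
qed

lemma range_coord_proj_subset_row_space:
  assumes "finite A" and "\<And>i. i \<in> A \<Longrightarrow> unit_vec i \<in> row_space l"
  shows "range (coord_proj A) \<subseteq> row_space l"
proof
  fix v :: "nat \<Rightarrow> 'a" assume "v \<in> range (coord_proj A)"
  then obtain c where "v = coord_proj A c" by auto
  moreover obtain h where "coord_proj A c = (\<lambda>s. \<Sum>l'\<in>{l}. query_vec l' (h l') s)"
    using coord_proj_recovered assms by (metis recovers_singleton)
  ultimately show "v \<in> row_space l" by (simp add: row_space_def)
qed

section \<open>Solo buckets and tight symbols\<close>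

definition solo_buckets :: "nat \<Rightarrow> nat set" where
  "solo_buckets i = {l\<in>{1..m}. recovers {l} i}"

definition solo_symbols :: "nat \<Rightarrow> nat set" where
  "solo_symbols l = {i\<in>{1..n}. recovers {l} i}"

definition tight_symbols :: "nat set" where
  "tight_symbols = {i\<in>{1..n}. card (solo_buckets i) \<le> 2 * k - m}"

lemma card_solo_buckets_ge:
  assumes "i \<in> {1..n}"
  shows "2 * k - m \<le> card (solo_buckets i)"
proof -
  obtain R where P: "is_partition_into k {1..m} R" and rec: "\<And>j. j \<in> {1..k} \<Longrightarrow> recovers (R j) i"
    using recovers_from_code[OF assms] by blast
  obtain J where J: "J \<subseteq> {1..k}" "\<And>j. j \<in> J \<Longrightarrow> card (R j) = 1" and card_J: "2 * k \<le> card J + m"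
    using partition_many_singletons[OF P] by auto
  have "(\<Union>j\<in>J. R j) \<subseteq> solo_buckets i"
  proof clarify
    fix j l assume "j \<in> J" "l \<in> R j"
    then have j: "j \<in> {1..k}" using J(1) by blast
    have "R j = {l}"
      using J(2)[OF \<open>j \<in> J\<close>] \<open>l \<in> R j\<close> by (metis card_1_singletonE singletonD)
    then have "recovers {l} i" using rec[OF j] by simp
    moreover have "l \<in> {1..m}"
      using partition_part_subset[OF P j] \<open>l \<in> R j\<close> by blast
    ultimately show "l \<in> solo_buckets i"
      by (simp add: solo_buckets_def)
  qed
  then have "card (\<Union>j\<in>J. R j) \<le> card (solo_buckets i)"
    by (intro card_mono) (auto simp: solo_buckets_def)
  moreover have "card (\<Union>j\<in>J. R j) = card J"
    using card_partition_UN[OF P _ J(1)] J(2) by simp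
  ultimately show ?thesis using card_J by linarith
qed

lemma tight_symbols_subset: "tight_symbols \<subseteq> {1..n}"
  by (auto simp: tight_symbols_def)

lemma card_solo_buckets_tight:
  "i \<in> tight_symbols \<Longrightarrow> card (solo_buckets i) = 2 * k - m"
  using card_solo_buckets_ge by (fastforce simp: tight_symbols_def)

text \<open>A tight symbol has fewer than \<open>k\<close> solo buckets, so one of the \<open>k\<close> recovery sets avoids
  them all.\<close>
lemma recovers_outside_solo_buckets:
  assumes "0 < k" and "k < m" and "i \<in> tight_symbols"
  shows "recovers ({1..m} - solo_buckets i) i"
proof -
  have "i \<in> {1..n}" using assms(3) by (simp add: tight_symbols_def)
  then obtain R where P: "is_partition_into k {1..m} R" and rec: "\<And>j. j \<in> {1..k} \<Longrightarrow> recovers (R j) i"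
    using recovers_from_code by blast
  have "solo_buckets i \<subseteq> {1..m}" by (auto simp: solo_buckets_def)
  moreover have "card (solo_buckets i) < k"
    using card_solo_buckets_tight[OF assms(3)] assms(1,2) by linarith
  ultimately obtain j where j: "j \<in> {1..k}" and "R j \<inter> solo_buckets i = {}"
    by (rule partition_part_disjoint[OF P finite_atLeastAtMost])
  then have "R j \<subseteq> {1..m} - solo_buckets i"
    using partition_part_subset[OF P j] by blast
  then show ?thesis
    using rec[OF j] by (simp add: recovers_mono)
qed

lemma sum_card_solo_symbols_ge:
  "(2 * k - m) * n + (n - card tight_symbols) \<le> (\<Sum>l\<in>{1..m}. card (solo_symbols l))"
proof -
  have "(\<Sum>l\<in>{1..m}. card (solo_symbols l)) = (\<Sum>i\<in>{1..n}. card (solo_buckets i))"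
    unfolding solo_symbols_def solo_buckets_def
    using sum.swap_restrict[of "{1..m}" "{1..n}" "\<lambda>_ _. 1::nat" "\<lambda>l i. recovers {l} i"]
    by simp
  also have "\<dots> \<ge> (\<Sum>i\<in>{1..n}. (2 * k - m) + (if i \<in> tight_symbols then 0 else 1))"
    using card_solo_buckets_ge by (intro sum_mono) (auto simp: tight_symbols_def)
  also have "(\<Sum>i\<in>{1..n}. (2 * k - m) + (if i \<in> tight_symbols then 0 else 1)) =
      (2 * k - m) * n + card ({1..n} - tight_symbols)"
    by (simp add: sum.distrib sum.If_cases Diff_eq)
  also have "card ({1..n} - tight_symbols) = n - card tight_symbols"
    by (subst card_Diff_subset) (auto simp: tight_symbols_def)
  finally show ?thesis .
qed

section \<open>Counting\<close>

lemma card_solo_symbols_le: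
  assumes "l \<in> {1..m}"
  shows "CARD('a) ^ card (solo_symbols l)
           * card (coord_proj {i\<in>tight_symbols. l \<notin> solo_buckets i} ` row_space l)
         \<le> CARD('a) ^ Nb l"
proof -
  have "solo_symbols l \<inter> {i\<in>tight_symbols. l \<notin> solo_buckets i} = {}"
    using assms by (auto simp: solo_symbols_def solo_buckets_def)
  moreover have "range (coord_proj (solo_symbols l)) \<subseteq> row_space l"
    by (rule range_coord_proj_subset_row_space) (auto simp: solo_symbols_def recovers_singleton)
  moreover have "finite (solo_symbols l)" by (simp add: solo_symbols_def)
  ultimately have "CARD('a) ^ card (solo_symbols l)
      * card (coord_proj {i\<in>tight_symbols. l \<notin> solo_buckets i} ` row_space l) \<le> card (row_space l)"
    by (intro card_coord_proj_image_le finite_row_space row_space_add)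
  then show ?thesis
    using card_row_space_le[of l] by linarith
qed

text \<open>The tight symbols with a given set \<open>S\<close> of solo buckets are recovered jointly from the
  buckets outside \<open>S\<close>.\<close>
lemma card_tight_class_le:
  fixes S :: "nat set"
  assumes "0 < k" and "k < m"
  defines "T \<equiv> {i\<in>tight_symbols. solo_buckets i = S}"
  shows "CARD('a) ^ card T \<le> (\<Prod>l\<in>{1..m} - S. card (coord_proj T ` row_space l))"
proof (rule card_range_coord_proj_le_prod)
  show "finite T" by (simp add: T_def tight_symbols_def)
  fix v :: "nat \<Rightarrow> 'a" assume "v \<in> range (coord_proj T)"
  then obtain c where v: "v = coord_proj T c" by blast
  have "recovers ({1..m} - S) i" if "i \<in> T" for i
    using that recovers_outside_solo_buckets[OF assms(1,2), of i] by (simp add: T_def)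
  then obtain h where "coord_proj T c = (\<lambda>s. \<Sum>l\<in>{1..m} - S. query_vec l (h l) s)"
    using coord_proj_recovered[OF \<open>finite T\<close>] by blast
  with v show "\<exists>w. (\<forall>l\<in>{1..m} - S. w l \<in> row_space l) \<and> v = (\<lambda>s. \<Sum>l\<in>{1..m} - S. w l s)"
    by (intro exI[of _ "\<lambda>l. query_vec l (h l)"]) (simp add: row_space_def)
qed (simp_all add: finite_row_space)

text \<open>Each tight symbol lies in the class of its \<open>(2k-m)\<close>-set of solo buckets; regrouping the
  class bounds by bucket, bucket \<open>l\<close> occurs for the \<open>(m-1 choose 2k-m)\<close> classes avoiding it.\<close>
lemma card_tight_symbols_le:
  assumes "0 < k" and "k < m"
  shows "CARD('a) ^ card tight_symbols
         \<le> (\<Prod>l\<in>{1..m}. card (coord_proj {i\<in>tight_symbols. l \<notin> solo_buckets i} ` row_space l))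
             ^ ((m - 1) choose (2 * k - m))"
proof -
  define classes where "classes = {S. S \<subseteq> {1..m} \<and> card S = 2 * k - m}"
  define T where "T S = {i\<in>tight_symbols. solo_buckets i = S}" for S
  define a where "a S l = card (coord_proj (T S) ` row_space l)" for S l
  define p where "p l = card (coord_proj {i\<in>tight_symbols. l \<notin> solo_buckets i} ` row_space l)" for l
  have fin_classes: "finite classes"
    by (rule finite_subset[of _ "Pow {1..m}"]) (auto simp: classes_def)
  have "tight_symbols = (\<Union>S\<in>classes. T S)"
    using card_solo_buckets_tight by (auto simp: T_def classes_def solo_buckets_def)
  also have "card (\<Union>S\<in>classes. T S) = (\<Sum>S\<in>classes. card (T S))"
    by (rule card_UN_disjoint[OF fin_classes]) (auto simp: T_def tight_symbols_def)
  finally have "card tight_symbols = (\<Sum>S\<in>classes. card (T S))" .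
  then have "CARD('a) ^ card tight_symbols = (\<Prod>S\<in>classes. CARD('a) ^ card (T S))"
    by (simp add: power_sum)
  also have "\<dots> \<le> (\<Prod>S\<in>classes. \<Prod>l\<in>{1..m} - S. a S l)"
    using card_tight_class_le[OF assms] by (intro prod_mono) (simp add: T_def a_def)
  also have "\<dots> = (\<Prod>l\<in>{1..m}. \<Prod>S\<in>{S\<in>classes. l \<notin> S}. a S l)"
    using prod.swap_restrict[OF fin_classes finite_atLeastAtMost, where g=a and R="\<lambda>S l. l \<notin> S"]
    by (simp add: set_diff_eq)
  also have "\<dots> \<le> (\<Prod>l\<in>{1..m}. \<Prod>S\<in>{S\<in>classes. l \<notin> S}. p l)"
    unfolding a_def p_def T_def
    by (intro prod_mono conjI card_coord_proj_image_mono finite_row_space) auto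
  also have "\<dots> = (\<Prod>l\<in>{1..m}. p l ^ ((m - 1) choose (2 * k - m)))"
  proof (rule prod.cong[OF refl])
    fix l assume "l \<in> {1..m}"
    then have "{S\<in>classes. l \<notin> S} = {S. S \<subseteq> {1..m} - {l} \<and> card S = 2 * k - m}"
      and "card ({1..m} - {l}) = m - 1"
      by (auto simp: classes_def)
    then show "(\<Prod>S\<in>{S\<in>classes. l \<notin> S}. p l) = p l ^ ((m - 1) choose (2 * k - m))"
      by (simp add: n_subsets)
  qed
  finally show ?thesis
    by (simp add: p_def prod_power_distrib)
qed

text \<open>The product of the projection sizes is squeezed between \<open>q ^ card tight_symbols\<close>
  (after taking a \<open>C\<close>-th power) and \<open>q ^ (N - \<Sum>l. card (solo_symbols l))\<close>.\<close>
lemma card_tight_symbols_plus_sum_card_solo_symbols_le: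
  assumes "0 < k" and "k < m"
  defines "C \<equiv> (m - 1) choose (2 * k - m)"
  shows "card tight_symbols + C * (\<Sum>l\<in>{1..m}. card (solo_symbols l)) \<le> C * (\<Sum>l\<in>{1..m}. Nb l)"
proof -
  define q where "q = CARD('a)"
  define X where "X = (\<Sum>l\<in>{1..m}. card (solo_symbols l))"
  define P where "P = (\<Prod>l\<in>{1..m}. card (coord_proj {i\<in>tight_symbols. l \<notin> solo_buckets i} ` row_space l))"
  have "card {0, 1 :: 'a} \<le> CARD('a)" by (rule card_mono) auto
  then have q: "1 < q" by (simp add: q_def)
  have "q ^ X * P = (\<Prod>l\<in>{1..m}. q ^ card (solo_symbols l)
                        * card (coord_proj {i\<in>tight_symbols. l \<notin> solo_buckets i} ` row_space l))"
    by (simp add: X_def P_def power_sum prod.distrib)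
  also have "\<dots> \<le> (\<Prod>l\<in>{1..m}. q ^ Nb l)"
    by (intro prod_mono) (simp add: q_def card_solo_symbols_le)
  finally have length: "q ^ X * P \<le> q ^ (\<Sum>l\<in>{1..m}. Nb l)"
    by (simp add: power_sum)
  have "q ^ (card tight_symbols + X * C) = q ^ card tight_symbols * (q ^ X) ^ C"
    by (simp add: power_add power_mult)
  also have "\<dots> \<le> P ^ C * (q ^ X) ^ C"
    using card_tight_symbols_le[OF assms(1,2)] by (simp add: q_def P_def C_def)
  also have "\<dots> = (q ^ X * P) ^ C"
    by (simp add: power_mult_distrib)
  also have "\<dots> \<le> (q ^ (\<Sum>l\<in>{1..m}. Nb l)) ^ C"
    using length by (rule power_mono) simp
  also have "\<dots> = q ^ ((\<Sum>l\<in>{1..m}. Nb l) * C)"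
    by (simp add: power_mult)
  finally have "card tight_symbols + X * C \<le> (\<Sum>l\<in>{1..m}. Nb l) * C"
    by (rule power_le_imp_le_exp[OF q])
  then show ?thesis
    by (simp add: X_def mult.commute)
qed

lemma total_length_bound:
  assumes "0 < k" and "k < m"
  shows "n + ((m - 1) choose (2 * k - m)) * ((2 * k - m) * n)
           \<le> ((m - 1) choose (2 * k - m)) * (\<Sum>l\<in>{1..m}. Nb l)"
proof -
  define C where "C = (m - 1) choose (2 * k - m)"
  define X where "X = (\<Sum>l\<in>{1..m}. card (solo_symbols l))"
  have small_subsets: "2 * k - m \<le> m - 1"
    using assms by linarith
  have "(2 * k - m) * n + (n - card tight_symbols) \<le> X"
    unfolding X_def by (rule sum_card_solo_symbols_ge)
  then have "C * ((2 * k - m) * n + (n - card tight_symbols)) \<le> C * X"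
    by (rule mult_left_mono) simp
  moreover have "n - card tight_symbols \<le> C * (n - card tight_symbols)"
    using small_subsets by (simp add: C_def zero_less_binomial Suc_le_eq)
  moreover have "card tight_symbols \<le> n"
    using card_mono[OF finite_atLeastAtMost tight_symbols_subset] by simp
  ultimately show ?thesis
    using card_tight_symbols_plus_sum_card_solo_symbols_le[OF assms]
    unfolding C_def[symmetric] X_def[symmetric] add_mult_distrib2 by linarith
qed

end

section \<open>Lower bound on \<open>N_P\<close>\<close>

lemma is_partition_into_singletons_and_tail:
  assumes "0 < k" and "k \<le> m"
  shows "is_partition_into k {1..m} (\<lambda>j. if j < k then {j} else {k..m})"
  unfolding is_partition_into_def
proof (intro conjI ballI impI)
  show "(\<Union>j\<in>{1..k}. if j < k then {j} else {k..m}) = {1..m}"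
  proof (intro equalityI subsetI)
    fix l assume "l \<in> {1..m}"
    then show "l \<in> (\<Union>j\<in>{1..k}. if j < k then {j} else {k..m})"
    proof (cases "l < k")
      case True
      with \<open>l \<in> {1..m}\<close> show ?thesis by (intro UN_I[of l]) auto
    next
      case False
      with \<open>l \<in> {1..m}\<close> assms show ?thesis by (intro UN_I[of k]) auto
    qed
  qed (use assms in \<open>auto split: if_splits\<close>)
qed (use assms in \<open>auto split: if_splits\<close>)

text \<open>Every bucket stores the whole message, so each part of the partition above recovers
  \<open>x i\<close> by reading coordinate \<open>i\<close> of any one of its buckets.\<close>
lemma replication_is_PIR_array_code:
  assumes "0 < n" and "0 < k" and "k \<le> m"
  shows "is_PIR_array_code n k m (\<lambda>_. n) (\<lambda>l t s. if t = s then 1::'a::{finite,field} else 0)"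
proof -
  let ?G = "\<lambda>l t s. if t = s then 1::'a else 0"
  let ?R = "\<lambda>j. if j < k then {j} else {k..m}"
  have val: "bucket_val n ?G x l t = (if t \<in> {1..n} then x t else 0)" for x :: "nat \<Rightarrow> 'a" and l t
    by (simp add: bucket_val_def if_distrib[of "\<lambda>y. y * _"] cong: if_cong)
  have read: "x i = (\<Sum>l\<in>?R j. (if l = j then 1 else 0)
      * (\<Sum>t\<in>{1..n}. (if t = i then 1 else 0) * bucket_val n ?G x l t))"
    if "i \<in> {1..n}" and "j \<in> {1..k}" for x :: "nat \<Rightarrow> 'a" and i j
    using that assms by (simp add: val if_distrib[of "\<lambda>y. y * _"] cong: if_cong)
  show ?thesis
    unfolding is_PIR_array_code_def
  proof (intro conjI ballI exI[of _ ?R])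
    fix i j assume "i \<in> {1..n}" "j \<in> {1..k}"
    then show "\<exists>f a. \<forall>x :: nat \<Rightarrow> 'a. x i = (\<Sum>l\<in>?R j. a l * (\<Sum>t\<in>{1..n}. f l t * bucket_val n ?G x l t))"
      by (intro exI[of _ "\<lambda>l t. if t = i then 1 else 0"] exI[of _ "\<lambda>l. if l = j then 1 else 0"]
          allI read)
  qed (use assms is_partition_into_singletons_and_tail[OF assms(2,3)] in auto)
qed

lemma N_P_attained:
  assumes "0 < n" and "0 < k" and "k \<le> m"
  obtains Nb and G :: "nat \<Rightarrow> nat \<Rightarrow> nat \<Rightarrow> 'a::{finite,field}"
  where "is_PIR_array_code n k m Nb G" and "N_P TYPE('a) n k m = (\<Sum>l\<in>{1..m}. Nb l)"
proof -
  have "\<exists>N Nb (G :: nat \<Rightarrow> nat \<Rightarrow> nat \<Rightarrow> 'a). is_PIR_array_code n k m Nb G \<and> (\<Sum>l\<in>{1..m}. Nb l) = N"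
    using replication_is_PIR_array_code[OF assms] by blast
  from LeastI_ex[OF this] show ?thesis
    using that unfolding N_P_def by auto
qed

theorem theorem3p2:
  fixes n k m :: nat
  assumes "0 < n" and "0 < k" and "0 < m" and "k < m" and "m < 2 * k"
  shows "real (N_P TYPE('a::{finite,field}) n k m)
           \<ge> (2 * real k - real m + 1 / real ((m - 1) choose (2 * k - m))) * real n"
proof -
  define C where "C = (m - 1) choose (2 * k - m)"
  obtain Nb and G :: "nat \<Rightarrow> nat \<Rightarrow> nat \<Rightarrow> 'a"
    where code: "is_PIR_array_code n k m Nb G" and N: "N_P TYPE('a) n k m = (\<Sum>l\<in>{1..m}. Nb l)"
    using N_P_attained[OF assms(1,2) less_imp_le[OF assms(4)]] by blast
  interpret PIR_array_code n k m Nb G by (rule PIR_array_code.intro[OF code])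
  have "n + C * ((2 * k - m) * n) \<le> C * N_P TYPE('a) n k m"
    using total_length_bound[OF assms(2,4)] unfolding N C_def .
  then have "real n + real C * (real (2 * k - m) * real n) \<le> real C * real (N_P TYPE('a) n k m)"
    by (metis of_nat_add of_nat_le_iff of_nat_mult)
  moreover have "real (2 * k - m) = 2 * real k - real m"
    using assms(5) by simp
  ultimately have "real n + real C * ((2 * real k - real m) * real n) \<le> real C * real (N_P TYPE('a) n k m)"
    by simp
  moreover have "0 < C"
    using assms by (simp add: C_def zero_less_binomial)
  ultimately show ?thesis
    unfolding C_def[symmetric] by (simp add: field_simps)
qed

end
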